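(* Let $\Delta$ and $\chi$ be integers with $2\le \chi\le \Delta$. If $G$ is a graph with maximum degree $\Delta$ and chromatic number $\chi$, then $$\chi'_{inj}(G)\le (\chi-1)\lceil 27\Delta\ln\Delta\rceil.$$ In particular, if $G$ is bipartite (with maximum degree $\Delta\ge 2$), then $\chi'_{inj}(G)\le \lceil 27\Delta\ln\Delta\rceil$.
   Context: All graphs are finite and simple; $\ln$ is the natural logarithm. An edge coloring of a graph $G$ (not necessarily proper) is \emph{injective} if any two distinct edges $e,f$ receive distinct colors whenever either (i) $e$ and $f$ share no vertex and some edge of $G$ joins an endpoint of $e$ to an endpoint of $f$, or (ii) $e$ and $f$ lie in a common triangle of $G$. The injective chromatic index $\chi'_{inj}(G)$ is the minimum number of colors in an injective edge coloring of $G$. *)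

theory Defs
  imports Complex_Main
begin

definition simple_graph :: "'a set \<Rightarrow> 'a set set \<Rightarrow> bool" where
  "simple_graph V E \<longleftrightarrow> finite V \<and> (\<forall>e\<in>E. e \<subseteq> V \<and> card e = 2)"

definition degree :: "'a set set \<Rightarrow> 'a \<Rightarrow> nat" where
  "degree E v = card {e\<in>E. v \<in> e}"

definition max_degree :: "'a set \<Rightarrow> 'a set set \<Rightarrow> nat" where
  "max_degree V E = Max (insert 0 (degree E ` V))"

definition proper_vertex_coloring :: "'a set \<Rightarrow> 'a set set \<Rightarrow> nat \<Rightarrow> ('a \<Rightarrow> nat) \<Rightarrow> bool" where
  "proper_vertex_coloring V E k c \<longleftrightarrow>
     c ` V \<subseteq> {..<k} \<and> (\<forall>u v. {u, v} \<in> E \<longrightarrow> c u \<noteq> c v)"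

definition chromatic_number :: "'a set \<Rightarrow> 'a set set \<Rightarrow> nat" where
  "chromatic_number V E = (LEAST k. \<exists>c. proper_vertex_coloring V E k c)"

definition bipartite :: "'a set \<Rightarrow> 'a set set \<Rightarrow> bool" where
  "bipartite V E \<longleftrightarrow> (\<exists>c. proper_vertex_coloring V E 2 c)"

definition inj_conflict :: "'a set set \<Rightarrow> 'a set \<Rightarrow> 'a set \<Rightarrow> bool" where
  "inj_conflict E e f \<longleftrightarrow>
     (e \<inter> f = {} \<and> (\<exists>g\<in>E. g \<inter> e \<noteq> {} \<and> g \<inter> f \<noteq> {})) \<or>
     (\<exists>a b c. {a, b} \<in> E \<and> {b, c} \<in> E \<and> {a, c} \<in> E \<and>
        e \<in> {{a, b}, {b, c}, {a, c}} \<and> f \<in> {{a, b}, {b, c}, {a, c}})"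

definition injective_edge_coloring :: "'a set set \<Rightarrow> nat \<Rightarrow> ('a set \<Rightarrow> nat) \<Rightarrow> bool" where
  "injective_edge_coloring E k col \<longleftrightarrow>
     col ` E \<subseteq> {..<k} \<and>
     (\<forall>e\<in>E. \<forall>f\<in>E. e \<noteq> f \<and> inj_conflict E e f \<longrightarrow> col e \<noteq> col f)"

definition inj_chromatic_index :: "'a set set \<Rightarrow> nat" where
  "inj_chromatic_index E = (LEAST k. \<exists>col. injective_edge_coloring E k col)"

end

theory Submission
  imports Defs "HOL-Library.FuncSet"
begin

text \<open>
  Split the edges by the smaller colour of their ends in a proper vertex colouring with
  \<open>\<chi>\<close> colours. The \<open>i\<close>-th part consists of edges with exactly one end in the independent
  colour class \<open>A\<^sub>i\<close>; with disjoint palettes for the parts it suffices to colour each part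
  injectively with \<open>K = \<lceil>27 \<Delta> ln \<Delta>\<rceil>\<close> colours.

  For one part, run \<open>K\<close> rounds in each of which every vertex is picked independently with
  probability \<open>1/(2\<Delta>)\<close>, and colour an edge \<open>uv\<close> with \<open>u \<in> A\<^sub>i\<close> by the first round in
  which \<open>v\<close> is the only picked vertex of \<open>N(u) \<union> N(v)\<close>. Edges of equal colour do not
  conflict: a conflict would need a second picked vertex in one of these neighbourhoods, or
  an edge inside \<open>A\<^sub>i\<close>. An edge fails in every round with probability at most
  \<open>(1 - 1/(6\<Delta>))^K \<le> \<Delta>^(-9/2)\<close>, and this event is determined by the rounds on
  \<open>N(u) \<union> N(v)\<close>, hence independent of all but \<open>2\<Delta>\<^sup>3\<close> of the other failure events. The
  Lovasz Local Lemma, proved here by counting on the finite product space of all rounds,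
  yields an outcome in which no edge fails. For \<open>\<Delta> \<le> 5\<close> a greedy colouring with
  \<open>2\<Delta>\<^sup>2 + 1\<close> colours suffices.
\<close>

section \<open>Events determined by coordinates of a finite product\<close>

definition depends_on :: "('i \<Rightarrow> 'v) set \<Rightarrow> 'i set \<Rightarrow> ('i \<Rightarrow> 'v) set \<Rightarrow> bool" where
  "depends_on \<Omega> Y A \<longleftrightarrow> (\<forall>\<omega>\<in>\<Omega>. \<forall>\<omega>'\<in>\<Omega>. (\<forall>i\<in>Y. \<omega> i = \<omega>' i) \<longrightarrow> (\<omega> \<in> A \<longleftrightarrow> \<omega>' \<in> A))"

lemma depends_onD:
  "depends_on \<Omega> Y A \<Longrightarrow> \<omega> \<in> A \<Longrightarrow> \<omega> \<in> \<Omega> \<Longrightarrow> \<omega>' \<in> \<Omega> \<Longrightarrow> (\<And>i. i \<in> Y \<Longrightarrow> \<omega> i = \<omega>' i) \<Longrightarrow> \<omega>' \<in> A"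
  unfolding depends_on_def by blast

lemma depends_on_mono: "depends_on \<Omega> Y A \<Longrightarrow> Y \<subseteq> Y' \<Longrightarrow> depends_on \<Omega> Y' A"
  unfolding depends_on_def by blast

lemma depends_on_space: "depends_on \<Omega> Y \<Omega>"
  unfolding depends_on_def by blast

lemma depends_on_Ball:
  assumes "\<And>t. t \<in> T \<Longrightarrow> depends_on \<Omega> (Y t) (G t)"
  shows "depends_on \<Omega> (\<Union>t\<in>T. Y t) {\<omega>\<in>\<Omega>. \<forall>t\<in>T. \<omega> \<in> G t}"
  unfolding depends_on_def
proof (intro ballI impI)
  fix \<omega> \<omega>' assume \<omega>: "\<omega> \<in> \<Omega>" "\<omega>' \<in> \<Omega>" and agree: "\<forall>i\<in>(\<Union>t\<in>T. Y t). \<omega> i = \<omega>' i"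
  have "\<omega> \<in> G t \<longleftrightarrow> \<omega>' \<in> G t" if "t \<in> T" for t
    using assms[OF that] \<omega> agree that unfolding depends_on_def by blast
  then show "\<omega> \<in> {\<omega>\<in>\<Omega>. \<forall>t\<in>T. \<omega> \<in> G t} \<longleftrightarrow> \<omega>' \<in> {\<omega>\<in>\<Omega>. \<forall>t\<in>T. \<omega> \<in> G t}"
    using \<omega> by blast
qed

lemma depends_on_Diff_UN:
  assumes "\<And>t. t \<in> T \<Longrightarrow> depends_on \<Omega> (Y t) (G t)"
  shows "depends_on \<Omega> (\<Union>t\<in>T. Y t) (\<Omega> - \<Union>(G ` T))"
proof -
  have "\<Omega> - \<Union>(G ` T) = {\<omega>\<in>\<Omega>. \<forall>t\<in>T. \<omega> \<in> \<Omega> - G t}" by blast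
  moreover have "depends_on \<Omega> (Y t) (\<Omega> - G t)" if "t \<in> T" for t
    using assms[OF that] unfolding depends_on_def by blast
  ultimately show ?thesis using depends_on_Ball[of T \<Omega> Y "\<lambda>t. \<Omega> - G t"] by simp
qed

lemma card_Int_PiE_split:
  assumes Y: "Y \<subseteq> I" and A: "A \<subseteq> PiE I F" "depends_on (PiE I F) Y A"
    and B: "B \<subseteq> PiE I F" "depends_on (PiE I F) (I - Y) B"
  shows "card (A \<inter> B) = card ((\<lambda>\<omega>. restrict \<omega> Y) ` A) * card ((\<lambda>\<omega>. restrict \<omega> (I - Y)) ` B)"
proof -
  define split where "split \<omega> = (restrict \<omega> Y, restrict \<omega> (I - Y))" for \<omega> :: "'a \<Rightarrow> 'b"
  have "inj_on split (PiE I F)"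
  proof (rule inj_onI)
    fix \<omega> \<omega>' assume "\<omega> \<in> PiE I F" "\<omega>' \<in> PiE I F" "split \<omega> = split \<omega>'"
    then have rY: "restrict \<omega> Y = restrict \<omega>' Y" and rY': "restrict \<omega> (I - Y) = restrict \<omega>' (I - Y)"
      by (simp_all add: split_def)
    have "\<omega> i = \<omega>' i" if "i \<in> I" for i
      using fun_cong[OF rY, of i] fun_cong[OF rY', of i] that by (cases "i \<in> Y") simp_all
    then show "\<omega> = \<omega>'"
      using \<open>\<omega> \<in> PiE I F\<close> \<open>\<omega>' \<in> PiE I F\<close> by (metis PiE_arb ext)
  qed
  then have inj: "inj_on split (A \<inter> B)" by (rule inj_on_subset) (use A(1) in blast)
  have "split ` (A \<inter> B) = (\<lambda>\<omega>. restrict \<omega> Y) ` A \<times> (\<lambda>\<omega>. restrict \<omega> (I - Y)) ` B"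
  proof (intro equalityI subsetI)
    fix p assume "p \<in> split ` (A \<inter> B)"
    then show "p \<in> (\<lambda>\<omega>. restrict \<omega> Y) ` A \<times> (\<lambda>\<omega>. restrict \<omega> (I - Y)) ` B"
      unfolding split_def by blast
  next
    fix p assume "p \<in> (\<lambda>\<omega>. restrict \<omega> Y) ` A \<times> (\<lambda>\<omega>. restrict \<omega> (I - Y)) ` B"
    then obtain a b where ab: "a \<in> A" "b \<in> B" "p = (restrict a Y, restrict b (I - Y))" by blast
    define \<omega> where "\<omega> i = (if i \<in> Y then a i else b i)" for i
    have \<omega>: "\<omega> \<in> PiE I F"
      using ab A(1) B(1) Y unfolding \<omega>_def by (auto simp: PiE_iff extensional_def)
    have "\<omega> \<in> A" by (rule depends_onD[OF A(2) ab(1)]) (use A(1) ab(1) \<omega> in \<open>auto simp: \<omega>_def\<close>)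
    moreover have "\<omega> \<in> B" by (rule depends_onD[OF B(2) ab(2)]) (use B(1) ab(2) \<omega> in \<open>auto simp: \<omega>_def\<close>)
    moreover have "split \<omega> = p" using ab(3) unfolding split_def \<omega>_def by (auto simp: restrict_def fun_eq_iff)
    ultimately show "p \<in> split ` (A \<inter> B)" by blast
  qed
  then show ?thesis using card_image[OF inj] by (simp add: card_cartesian_product)
qed

lemma card_Int_PiE_independent:
  assumes Y: "Y \<subseteq> I" and A: "A \<subseteq> PiE I F" "depends_on (PiE I F) Y A"
    and B: "B \<subseteq> PiE I F" "depends_on (PiE I F) (I - Y) B"
  shows "card (A \<inter> B) * card (PiE I F) = card A * card B"
proof -
  let ?\<Omega> = "PiE I F" and ?rY = "\<lambda>\<omega>. restrict \<omega> Y" and ?rY' = "\<lambda>\<omega>. restrict \<omega> (I - Y)"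
  note split = card_Int_PiE_split[OF Y]
  have "card A = card (?rY ` A) * card (?rY' ` ?\<Omega>)"
    using split[OF A subset_refl depends_on_space] A(1) by (simp add: Int_absorb2)
  moreover have "card B = card (?rY ` ?\<Omega>) * card (?rY' ` B)"
    using split[OF subset_refl depends_on_space B] B(1) by (simp add: Int_absorb1)
  moreover have "card ?\<Omega> = card (?rY ` ?\<Omega>) * card (?rY' ` ?\<Omega>)"
    using split[OF subset_refl depends_on_space subset_refl depends_on_space] by simp
  moreover have "card (A \<inter> B) = card (?rY ` A) * card (?rY' ` B)"
    by (rule split[OF A B])
  ultimately show ?thesis by (simp only: ac_simps)
qed

lemma card_PiE_Ball_independent:
  assumes "finite T"
    and "\<And>t. t \<in> T \<Longrightarrow> Y t \<subseteq> I"
    and "\<And>t. t \<in> T \<Longrightarrow> G t \<subseteq> PiE I F"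
    and "\<And>t. t \<in> T \<Longrightarrow> depends_on (PiE I F) (Y t) (G t)"
    and "\<And>s t. s \<in> T \<Longrightarrow> t \<in> T \<Longrightarrow> s \<noteq> t \<Longrightarrow> Y s \<inter> Y t = {}"
  shows "card {\<omega>\<in>PiE I F. \<forall>t\<in>T. \<omega> \<in> G t} * card (PiE I F) ^ card T
         = (\<Prod>t\<in>T. card (G t)) * card (PiE I F)"
  using assms
proof (induction T rule: finite_induct)
  case empty
  then show ?case by simp
next
  case (insert t T)
  let ?\<Omega> = "PiE I F"
  let ?H = "{\<omega>\<in>?\<Omega>. \<forall>s\<in>T. \<omega> \<in> G s}"
  have "depends_on ?\<Omega> (\<Union>s\<in>T. Y s) ?H"
    by (rule depends_on_Ball) (use insert.prems in auto)
  moreover have "(\<Union>s\<in>T. Y s) \<subseteq> I - Y t"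
    using insert.prems(1,4) insert.hyps(2) by blast
  ultimately have "depends_on ?\<Omega> (I - Y t) ?H"
    by (rule depends_on_mono)
  then have indep: "card (G t \<inter> ?H) * card ?\<Omega> = card (G t) * card ?H"
    using insert.prems(1-3) by (intro card_Int_PiE_independent) auto
  have "{\<omega>\<in>?\<Omega>. \<forall>s\<in>insert t T. \<omega> \<in> G s} = G t \<inter> ?H"
    using insert.prems(2)[of t] by auto
  then have "card {\<omega>\<in>?\<Omega>. \<forall>s\<in>insert t T. \<omega> \<in> G s} * card ?\<Omega> ^ card (insert t T)
      = card (G t \<inter> ?H) * card ?\<Omega> * card ?\<Omega> ^ card T"
    using insert.hyps by simp
  also have "\<dots> = card (G t) * (card ?H * card ?\<Omega> ^ card T)"
    by (simp add: indep)
  also have "card ?H * card ?\<Omega> ^ card T = (\<Prod>s\<in>T. card (G s)) * card ?\<Omega>"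
    by (rule insert.IH) (use insert.prems in auto)
  also have "card (G t) * ((\<Prod>s\<in>T. card (G s)) * card ?\<Omega>) = (\<Prod>s\<in>insert t T. card (G s)) * card ?\<Omega>"
    using insert.hyps by simp
  finally show ?case .
qed

lemma card_Int_avoiding_PiE_independent:
  assumes Y: "Y \<subseteq> I" and A: "A \<subseteq> PiE I F" "depends_on (PiE I F) Y A"
    and B: "\<And>s. s \<in> S \<Longrightarrow> depends_on (PiE I F) (Ys s) (B s)"
    and disjoint: "\<And>s. s \<in> S \<Longrightarrow> Ys s \<subseteq> I - Y"
  shows "card (A \<inter> (PiE I F - \<Union>(B ` S))) * card (PiE I F) = card A * card (PiE I F - \<Union>(B ` S))"
proof (rule card_Int_PiE_independent[OF Y A])
  have "depends_on (PiE I F) (\<Union>s\<in>S. Ys s) (PiE I F - \<Union>(B ` S))"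
    using B by (rule depends_on_Diff_UN)
  then show "depends_on (PiE I F) (I - Y) (PiE I F - \<Union>(B ` S))"
    by (rule depends_on_mono) (use disjoint in blast)
qed auto

lemma card_PiE_coordinate_constraints:
  assumes I: "finite I" and Y: "Y \<subseteq> I" and F: "\<And>i. i \<in> Y \<Longrightarrow> F i \<subseteq> M"
  shows "card {\<omega> \<in> PiE I (\<lambda>_. M). \<forall>i\<in>Y. \<omega> i \<in> F i} = (\<Prod>i\<in>Y. card (F i)) * card M ^ card (I - Y)"
proof -
  have "{\<omega> \<in> PiE I (\<lambda>_. M). \<forall>i\<in>Y. \<omega> i \<in> F i} = PiE I (\<lambda>i. if i \<in> Y then F i else M)"
    using Y F by (auto simp: PiE_iff extensional_def; metis subsetD)
  moreover have "(\<Prod>i\<in>I. card (if i \<in> Y then F i else M))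
      = (\<Prod>i\<in>I - Y. card (if i \<in> Y then F i else M)) * (\<Prod>i\<in>Y. card (if i \<in> Y then F i else M))"
    by (rule prod.subset_diff[OF Y I])
  moreover have "(\<Prod>i\<in>Y. card (if i \<in> Y then F i else M)) = (\<Prod>i\<in>Y. card (F i))" by simp
  moreover have "(\<Prod>i\<in>I - Y. card (if i \<in> Y then F i else M)) = card M ^ card (I - Y)" by simp
  ultimately show ?thesis by (simp add: card_PiE[OF I] mult.commute)
qed

section \<open>The Lovasz Local Lemma by counting\<close>

text \<open>
  The symmetric Local Lemma for the uniform distribution on \<open>\<Omega>\<close>, with \<open>4\<close> in place of \<open>e\<close>.
  Of the mutual independence of \<open>A j\<close> from the events outside \<open>\<Gamma> j\<close> only the one-sided
  inequality \<open>P(A j | avoiding S) \<le> P(A j)\<close> is assumed.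
\<close>

locale counting_lll =
  fixes \<Omega> :: "'w set" and J :: "'j set" and A :: "'j \<Rightarrow> 'w set" and \<Gamma> :: "'j \<Rightarrow> 'j set"
    and d :: nat
  assumes finite_space: "finite \<Omega>" and finite_index: "finite J" and space_nonempty: "\<Omega> \<noteq> {}"
    and independent_of_non_neighbours: "\<And>j S. j \<in> J \<Longrightarrow> S \<subseteq> J \<Longrightarrow> j \<notin> S \<Longrightarrow> S \<inter> \<Gamma> j = {} \<Longrightarrow>
      card (A j \<inter> (\<Omega> - \<Union>(A ` S))) * card \<Omega> \<le> card (A j) * card (\<Omega> - \<Union>(A ` S))"
    and card_neighbours_le: "\<And>j. j \<in> J \<Longrightarrow> card (\<Gamma> j \<inter> J) \<le> d"
    and card_event_le: "\<And>j. j \<in> J \<Longrightarrow> 4 * (d + 1) * card (A j) \<le> card \<Omega>"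
begin

abbreviation avoiding :: "'j set \<Rightarrow> 'w set" where
  "avoiding S \<equiv> \<Omega> - \<Union>(A ` S)"

lemma card_event_avoiding_non_neighbours_le:
  assumes "j \<in> J" "S \<subseteq> J" "j \<notin> S" "S \<inter> \<Gamma> j = {}"
  shows "4 * (d + 1) * card (A j \<inter> avoiding S) \<le> card (avoiding S)"
proof -
  have "card (A j \<inter> avoiding S) * card \<Omega> \<le> card (A j) * card (avoiding S)"
    by (rule independent_of_non_neighbours[OF assms])
  then have "card \<Omega> * (4 * (d + 1) * card (A j \<inter> avoiding S)) \<le> 4 * (d + 1) * card (A j) * card (avoiding S)"
    by (simp add: ac_simps)
  also have "\<dots> \<le> card \<Omega> * card (avoiding S)"
    using card_event_le[OF assms(1)] by (simp add: mult.commute)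
  finally show ?thesis using finite_space space_nonempty by (simp add: card_gt_0_iff)
qed

lemma card_avoiding_le_twice:
  assumes "finite S" "card S \<le> d"
    and "\<And>k. k \<in> S \<Longrightarrow> 2 * (d + 1) * card (A k \<inter> avoiding T) \<le> card (avoiding T)"
  shows "card (avoiding T) \<le> 2 * card (avoiding (S \<union> T))"
proof -
  let ?\<Sigma> = "\<Sum>k\<in>S. card (A k \<inter> avoiding T)"
  have "card (avoiding T) \<le> card (avoiding (S \<union> T) \<union> (\<Union>k\<in>S. A k \<inter> avoiding T))"
    using finite_space by (intro card_mono) auto
  also have "\<dots> \<le> card (avoiding (S \<union> T)) + card (\<Union>k\<in>S. A k \<inter> avoiding T)"
    by (rule card_Un_le)
  also have "card (\<Union>k\<in>S. A k \<inter> avoiding T) \<le> ?\<Sigma>"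
    using assms(1) by (rule card_UN_le)
  finally have cover: "card (avoiding T) \<le> card (avoiding (S \<union> T)) + ?\<Sigma>"
    by simp
  have "(d + 1) * (2 * ?\<Sigma>) = (\<Sum>k\<in>S. 2 * (d + 1) * card (A k \<inter> avoiding T))"
    by (simp add: sum_distrib_left ac_simps)
  also have "\<dots> \<le> card S * card (avoiding T)"
    using sum_mono[of S _ "\<lambda>_. card (avoiding T)"] assms(3) by simp
  also have "\<dots> \<le> (d + 1) * card (avoiding T)" using assms(2) by (intro mult_le_mono1) simp
  finally have "2 * ?\<Sigma> \<le> card (avoiding T)" by (rule mult_left_le_imp_le) simp
  with cover show ?thesis by linarith
qed

lemma card_event_avoiding_le:
  assumes "S \<subseteq> J" "j \<in> J" "j \<notin> S"
  shows "2 * (d + 1) * card (A j \<inter> avoiding S) \<le> card (avoiding S)"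
  using assms
proof (induction "card S" arbitrary: S j rule: less_induct)
  case less
  define S1 S2 where "S1 = S \<inter> \<Gamma> j" and "S2 = S - \<Gamma> j"
  have "finite S" using less.prems(1) finite_index finite_subset by blast
  have "card S1 \<le> card (\<Gamma> j \<inter> J)"
    using less.prems(1) finite_index unfolding S1_def by (intro card_mono) auto
  then have "card S1 \<le> d" using card_neighbours_le[OF less.prems(2)] by linarith
  moreover have "2 * (d + 1) * card (A k \<inter> avoiding S2) \<le> card (avoiding S2)" if "k \<in> S1" for k
  proof -
    have "S2 \<subset> S" using that unfolding S1_def S2_def by blast
    then have "card S2 < card S" using \<open>finite S\<close> by (simp add: psubset_card_mono)
    then show ?thesis using less.hyps[of S2 k] that less.prems unfolding S1_def S2_def by auto
  qed
  ultimately have "card (avoiding S2) \<le> 2 * card (avoiding (S1 \<union> S2))"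
    using \<open>finite S\<close> unfolding S1_def by (intro card_avoiding_le_twice) auto
  also have "S1 \<union> S2 = S" by (auto simp: S1_def S2_def)
  finally have half: "card (avoiding S2) \<le> 2 * card (avoiding S)" .
  have "4 * (d + 1) * card (A j \<inter> avoiding S2) \<le> card (avoiding S2)"
    using less.prems by (intro card_event_avoiding_non_neighbours_le) (auto simp: S2_def)
  moreover have "card (A j \<inter> avoiding S) \<le> card (A j \<inter> avoiding S2)"
    using finite_space by (intro card_mono) (auto simp: S2_def)
  then have "4 * (d + 1) * card (A j \<inter> avoiding S) \<le> 4 * (d + 1) * card (A j \<inter> avoiding S2)"
    by (rule mult_le_mono2)
  ultimately show ?case using half by linarith
qed

lemma card_space_le_avoiding:
  assumes "S \<subseteq> J"
  shows "card \<Omega> \<le> 2 ^ card S * card (avoiding S)"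
proof -
  have "finite S" using assms finite_index finite_subset by blast
  then show ?thesis using assms
  proof (induction S rule: finite_induct)
    case empty
    then show ?case by simp
  next
    case (insert j S)
    have "avoiding (insert j S) = avoiding S - A j \<inter> avoiding S" by auto
    then have "card (avoiding (insert j S)) = card (avoiding S) - card (A j \<inter> avoiding S)"
      using finite_space by (simp add: card_Diff_subset)
    moreover have "2 * (d + 1) * card (A j \<inter> avoiding S) \<le> card (avoiding S)"
      using insert by (intro card_event_avoiding_le) auto
    ultimately have step: "card (avoiding S) \<le> 2 * card (avoiding (insert j S))" by simp
    have "card \<Omega> \<le> 2 ^ card S * card (avoiding S)" using insert by simp
    also have "\<dots> \<le> 2 ^ card S * (2 * card (avoiding (insert j S)))" using step by simp
    also have "\<dots> = 2 ^ card (insert j S) * card (avoiding (insert j S))" using insert.hyps by simp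
    finally show ?case .
  qed
qed

theorem exists_outcome_avoiding_all: "\<exists>\<omega>\<in>\<Omega>. \<forall>j\<in>J. \<omega> \<notin> A j"
proof -
  have "0 < card \<Omega>" using finite_space space_nonempty by (simp add: card_gt_0_iff)
  then have "card (avoiding J) \<noteq> 0" using card_space_le_avoiding[OF subset_refl] by (metis mult_0_right not_le)
  then have "avoiding J \<noteq> {}" by (metis card.empty)
  then show ?thesis by blast
qed

end

section \<open>Simple graphs\<close>

definition nbrs :: "'a set set \<Rightarrow> 'a \<Rightarrow> 'a set" where
  "nbrs E x = {y. {x, y} \<in> E}"

definition edge_nbhd :: "'a set set \<Rightarrow> 'a set \<Rightarrow> 'a set" where
  "edge_nbhd E e = (\<Union>x\<in>e. nbrs E x)"

lemma edge_nbhd_doubleton: "edge_nbhd E {u, v} = nbrs E u \<union> nbrs E v"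
  by (simp add: edge_nbhd_def)

lemma simple_graph_finite_edges: "simple_graph V E \<Longrightarrow> finite E"
  unfolding simple_graph_def by (meson finite_Pow_iff finite_subset subsetI PowI)

lemma simple_graph_edgeE:
  assumes "simple_graph V E" "e \<in> E"
  obtains x y where "e = {x, y}" "x \<noteq> y"
  using assms unfolding simple_graph_def by (meson card_2_iff)

lemma simple_graph_edge_vertices:
  assumes "simple_graph V E" "{x, y} \<in> E"
  shows "x \<in> V" "y \<in> V" "x \<noteq> y"
proof -
  have "{x, y} \<subseteq> V" "card {x, y} = 2" using assms unfolding simple_graph_def by blast+
  then show "x \<in> V" "y \<in> V" "x \<noteq> y" by auto
qed

lemma nbrs_subset: "simple_graph V E \<Longrightarrow> nbrs E x \<subseteq> V"
  unfolding nbrs_def using simple_graph_edge_vertices by fastforce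

lemma finite_nbrs: "simple_graph V E \<Longrightarrow> finite (nbrs E x)"
  using nbrs_subset unfolding simple_graph_def by (meson finite_subset)

lemma degree_le_max_degree:
  assumes "simple_graph V E"
  shows "degree E x \<le> max_degree V E"
proof (cases "x \<in> V")
  case True
  then show ?thesis
    using assms unfolding simple_graph_def max_degree_def by (intro Max_ge) auto
next
  case False
  then have "{e\<in>E. x \<in> e} = {}" using assms unfolding simple_graph_def by blast
  then show ?thesis unfolding degree_def by (metis card.empty zero_le)
qed

lemma card_nbrs_le:
  assumes "simple_graph V E"
  shows "card (nbrs E x) \<le> max_degree V E"
proof -
  have "inj_on (\<lambda>y. {x, y}) (nbrs E x)" by (rule inj_onI) (auto simp: doubleton_eq_iff)
  then have "card (nbrs E x) = card ((\<lambda>y. {x, y}) ` nbrs E x)" by (simp add: card_image)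
  also have "\<dots> \<le> degree E x"
    unfolding degree_def using simple_graph_finite_edges[OF assms]
    by (intro card_mono) (auto simp: nbrs_def)
  also have "\<dots> \<le> max_degree V E" by (rule degree_le_max_degree[OF assms])
  finally show ?thesis .
qed

lemma card_UN_nbrs_le:
  assumes "simple_graph V E" "finite M"
  shows "card (\<Union>x\<in>M. nbrs E x) \<le> card M * max_degree V E"
proof -
  have "card (\<Union>x\<in>M. nbrs E x) \<le> (\<Sum>x\<in>M. card (nbrs E x))" by (rule card_UN_le[OF assms(2)])
  also have "\<dots> \<le> (\<Sum>x\<in>M. max_degree V E)" by (rule sum_mono) (rule card_nbrs_le[OF assms(1)])
  finally show ?thesis by simp
qed

lemma card_edges_meeting_le:
  assumes "simple_graph V E" "finite M"
  shows "card {f\<in>E. f \<inter> M \<noteq> {}} \<le> card M * max_degree V E"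
proof -
  have "{f\<in>E. f \<inter> M \<noteq> {}} = (\<Union>x\<in>M. {f\<in>E. x \<in> f})" by blast
  then have "card {f\<in>E. f \<inter> M \<noteq> {}} \<le> (\<Sum>x\<in>M. degree E x)"
    using card_UN_le[OF assms(2)] unfolding degree_def by simp
  also have "\<dots> \<le> (\<Sum>x\<in>M. max_degree V E)" by (rule sum_mono) (rule degree_le_max_degree[OF assms(1)])
  finally show ?thesis by simp
qed

lemma edge_nbhd_subset: "simple_graph V E \<Longrightarrow> edge_nbhd E e \<subseteq> V"
  unfolding edge_nbhd_def using nbrs_subset by (metis UN_least)

lemma edge_subset_edge_nbhd:
  assumes "simple_graph V E" "e \<in> E"
  shows "e \<subseteq> edge_nbhd E e"
proof -
  obtain x y where "e = {x, y}" using simple_graph_edgeE[OF assms] by metis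
  moreover from this assms(2) have "y \<in> nbrs E x" "x \<in> nbrs E y"
    by (simp_all add: nbrs_def insert_commute)
  ultimately show ?thesis by (simp add: edge_nbhd_doubleton)
qed

lemma card_edge_nbhd_le:
  assumes "simple_graph V E" "e \<in> E"
  shows "card (edge_nbhd E e) \<le> 2 * max_degree V E"
proof -
  have "card e = 2" using assms unfolding simple_graph_def by blast
  then have "finite e" by (intro card_ge_0_finite) simp
  then have "card (edge_nbhd E e) \<le> card e * max_degree V E"
    unfolding edge_nbhd_def by (rule card_UN_nbrs_le[OF assms(1)])
  then show ?thesis using \<open>card e = 2\<close> by simp
qed

lemma edge_nbhd_meets_iff: "edge_nbhd E f \<inter> M \<noteq> {} \<longleftrightarrow> f \<inter> (\<Union>x\<in>M. nbrs E x) \<noteq> {}"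
  unfolding edge_nbhd_def nbrs_def by (auto simp: insert_commute; blast)

lemma card_edges_near_le:
  assumes G: "simple_graph V E" and e: "e \<in> E"
  shows "card {f\<in>E. edge_nbhd E f \<inter> edge_nbhd E e \<noteq> {}} \<le> 2 * max_degree V E ^ 3"
proof -
  let ?\<Delta> = "max_degree V E" and ?M = "\<Union>x\<in>edge_nbhd E e. nbrs E x"
  have fin: "finite (edge_nbhd E e)"
    using edge_nbhd_subset[OF G] G unfolding simple_graph_def by (meson finite_subset)
  have "card ?M \<le> card (edge_nbhd E e) * ?\<Delta>" by (rule card_UN_nbrs_le[OF G fin])
  also have "\<dots> \<le> 2 * ?\<Delta> * ?\<Delta>" using card_edge_nbhd_le[OF G e] by (rule mult_le_mono1)
  finally have card_M: "card ?M \<le> 2 * ?\<Delta> * ?\<Delta>" .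
  have "finite ?M" using fin finite_nbrs[OF G] by blast
  then have "card {f\<in>E. f \<inter> ?M \<noteq> {}} \<le> card ?M * ?\<Delta>" by (rule card_edges_meeting_le[OF G])
  also have "\<dots> \<le> 2 * ?\<Delta> * ?\<Delta> * ?\<Delta>" using card_M by (rule mult_le_mono1)
  also have "\<dots> = 2 * ?\<Delta> ^ 3" by (simp add: power3_eq_cube)
  finally show ?thesis by (simp only: edge_nbhd_meets_iff)
qed

lemma proper_vertex_coloring_edge:
  assumes G: "simple_graph V E" and c: "proper_vertex_coloring V E k c" and e: "e \<in> E"
  obtains u v where "e = {u, v}" "c u < c v" "c v < k"
proof -
  obtain x y where xy: "e = {x, y}" using simple_graph_edgeE[OF G e] by metis
  have "x \<in> V" "y \<in> V" using simple_graph_edge_vertices[OF G] e xy by blast+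
  then have "c x < k" "c y < k" using c unfolding proper_vertex_coloring_def by auto
  have "c x \<noteq> c y" using c e xy unfolding proper_vertex_coloring_def by blast
  show ?thesis
  proof (cases "c x < c y")
    case True
    then show ?thesis using that[of x y] xy \<open>c y < k\<close> by blast
  next
    case False
    then have "c y < c x" using \<open>c x \<noteq> c y\<close> by linarith
    then show ?thesis using that[of y x] xy \<open>c x < k\<close> by (simp add: insert_commute)
  qed
qed

lemma exists_chromatic_coloring:
  assumes G: "simple_graph V E"
  shows "\<exists>c. proper_vertex_coloring V E (chromatic_number V E) c"
proof -
  have "finite V" using G by (simp add: simple_graph_def)
  then obtain h where h: "bij_betw h V {0..<card V}" using ex_bij_betw_finite_nat by blast
  have "h u \<noteq> h v" if "{u, v} \<in> E" for u v
    using h simple_graph_edge_vertices[OF G that] by (auto simp: bij_betw_def inj_on_def)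
  moreover have "h ` V \<subseteq> {..<card V}" using h by (auto simp: bij_betw_def)
  ultimately have "proper_vertex_coloring V E (card V) h"
    unfolding proper_vertex_coloring_def by blast
  then have "\<exists>k c. proper_vertex_coloring V E k c" by blast
  then show ?thesis unfolding chromatic_number_def by (rule LeastI_ex)
qed

section \<open>Injective colourings of edge sets\<close>

definition injective_coloring_on :: "'a set set \<Rightarrow> 'a set set \<Rightarrow> nat \<Rightarrow> ('a set \<Rightarrow> nat) \<Rightarrow> bool" where
  "injective_coloring_on E F k col \<longleftrightarrow>
     col ` F \<subseteq> {..<k} \<and> (\<forall>e\<in>F. \<forall>f\<in>F. e \<noteq> f \<and> inj_conflict E e f \<longrightarrow> col e \<noteq> col f)"

lemma inj_conflict_sym: "inj_conflict E e f \<Longrightarrow> inj_conflict E f e"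
  unfolding inj_conflict_def by blast

lemma triangle_edge:
  assumes "{a, b} \<in> E" "{b, c} \<in> E" "{a, c} \<in> E" "p \<in> {a, b, c}" "q \<in> {a, b, c}" "p \<noteq> q"
  shows "{p, q} \<in> E"
  using assms by (auto simp: insert_commute)

lemma inj_conflict_meets_edge_nbhd:
  assumes G: "simple_graph V E" and f: "f \<in> E" and conflict: "inj_conflict E e f"
  shows "f \<inter> edge_nbhd E e \<noteq> {}"
  using conflict unfolding inj_conflict_def
proof (elim disjE conjE exE bexE)
  fix g assume disj: "e \<inter> f = {}" and g: "g \<in> E" "g \<inter> e \<noteq> {}" "g \<inter> f \<noteq> {}"
  obtain z w where "z \<in> g \<inter> e" "w \<in> g \<inter> f" using g by blast
  moreover obtain x y where "g = {x, y}" using simple_graph_edgeE[OF G g(1)] by metis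
  ultimately have "g = {z, w}" using disj by auto
  then have "w \<in> nbrs E z" using g(1) by (simp add: nbrs_def)
  then show ?thesis using \<open>z \<in> g \<inter> e\<close> \<open>w \<in> g \<inter> f\<close> by (auto simp: edge_nbhd_def)
next
  fix a b c assume tri: "{a, b} \<in> E" "{b, c} \<in> E" "{a, c} \<in> E"
    "e \<in> {{a, b}, {b, c}, {a, c}}" "f \<in> {{a, b}, {b, c}, {a, c}}"
  obtain u where u: "u \<in> e" using tri(4) by blast
  obtain x y where "f = {x, y}" "x \<noteq> y" using simple_graph_edgeE[OF G f] by metis
  then obtain w where w: "w \<in> f" "w \<noteq> u" by blast
  have "u \<in> {a, b, c}" "w \<in> {a, b, c}" using tri(4,5) u w(1) by auto
  then have "{u, w} \<in> E" using triangle_edge[OF tri(1-3)] w(2) by blast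
  then show ?thesis using u w(1) by (auto simp: edge_nbhd_def nbrs_def)
qed

lemma card_inj_conflicts_le:
  assumes G: "simple_graph V E" and e: "e \<in> E"
  shows "card {f\<in>E. f \<noteq> e \<and> inj_conflict E e f} \<le> 2 * max_degree V E ^ 2"
proof -
  have fin: "finite (edge_nbhd E e)"
    using edge_nbhd_subset[OF G] G unfolding simple_graph_def by (meson finite_subset)
  have "card {f\<in>E. f \<noteq> e \<and> inj_conflict E e f} \<le> card {f\<in>E. f \<inter> edge_nbhd E e \<noteq> {}}"
    using simple_graph_finite_edges[OF G] inj_conflict_meets_edge_nbhd[OF G]
    by (intro card_mono) auto
  also have "\<dots> \<le> card (edge_nbhd E e) * max_degree V E" by (rule card_edges_meeting_le[OF G fin])
  also have "\<dots> \<le> 2 * max_degree V E * max_degree V E"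
    using card_edge_nbhd_le[OF G e] by (rule mult_le_mono1)
  finally show ?thesis by (simp add: power2_eq_square)
qed

lemma greedy_coloring:
  fixes R :: "'x \<Rightarrow> 'x \<Rightarrow> bool"
  assumes X: "finite X" and sym: "\<And>x y. R x y \<Longrightarrow> R y x"
    and deg: "\<And>x. x \<in> X \<Longrightarrow> card {y\<in>X. y \<noteq> x \<and> R x y} \<le> D"
  shows "\<exists>col. col ` X \<subseteq> {..<Suc D} \<and> (\<forall>x\<in>X. \<forall>y\<in>X. x \<noteq> y \<and> R x y \<longrightarrow> col x \<noteq> col y)"
proof -
  have "\<exists>col. col ` Y \<subseteq> {..<Suc D} \<and> (\<forall>x\<in>Y. \<forall>y\<in>Y. x \<noteq> y \<and> R x y \<longrightarrow> col x \<noteq> col y)"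
    if "Y \<subseteq> X" for Y
    using finite_subset[OF that X] that
  proof (induction Y rule: finite_induct)
    case empty
    then show ?case by simp
  next
    case (insert x Y)
    then obtain col where col: "col ` Y \<subseteq> {..<Suc D}"
      "\<forall>u\<in>Y. \<forall>v\<in>Y. u \<noteq> v \<and> R u v \<longrightarrow> col u \<noteq> col v" by auto
    let ?N = "{y\<in>Y. R x y}"
    have "card ?N \<le> card {y\<in>X. y \<noteq> x \<and> R x y}"
      using insert X by (intro card_mono) auto
    then have "card (col ` ?N) < card {..<Suc D}"
      using deg[of x] insert.prems card_image_le[of ?N col] insert.hyps(1) by simp
    then have "\<not> {..<Suc D} \<subseteq> col ` ?N"
      using card_mono[of "col ` ?N" "{..<Suc D}"] insert.hyps(1) by auto
    then obtain c where c: "c < Suc D" "c \<notin> col ` ?N" by auto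
    have "(col(x := c)) u \<noteq> (col(x := c)) v"
      if "u \<in> insert x Y" "v \<in> insert x Y" "u \<noteq> v" "R u v" for u v
      using that sym[OF that(4)] col(2) c(2) insert.hyps(2) by auto
    moreover have "(col(x := c)) ` insert x Y \<subseteq> {..<Suc D}"
      using col(1) c(1) insert.hyps(2) by auto
    ultimately show ?case by blast
  qed
  then show ?thesis by blast
qed

lemma greedy_injective_coloring_on:
  assumes G: "simple_graph V E" and F: "F \<subseteq> E"
  shows "\<exists>col. injective_coloring_on E F (2 * max_degree V E ^ 2 + 1) col"
proof -
  have "\<exists>col. col ` F \<subseteq> {..<Suc (2 * max_degree V E ^ 2)} \<and>
      (\<forall>e\<in>F. \<forall>f\<in>F. e \<noteq> f \<and> inj_conflict E e f \<longrightarrow> col e \<noteq> col f)"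
  proof (rule greedy_coloring)
    show "finite F" using simple_graph_finite_edges[OF G] F finite_subset by blast
    show "inj_conflict E f e" if "inj_conflict E e f" for e f using that by (rule inj_conflict_sym)
    fix e assume "e \<in> F"
    have "card {f\<in>F. f \<noteq> e \<and> inj_conflict E e f} \<le> card {f\<in>E. f \<noteq> e \<and> inj_conflict E e f}"
      using F simple_graph_finite_edges[OF G] by (intro card_mono) auto
    also have "\<dots> \<le> 2 * max_degree V E ^ 2" using card_inj_conflicts_le[OF G] \<open>e \<in> F\<close> F by blast
    finally show "card {f\<in>F. f \<noteq> e \<and> inj_conflict E e f} \<le> 2 * max_degree V E ^ 2" .
  qed
  then show ?thesis unfolding injective_coloring_on_def by simp
qed

lemma injective_coloring_on_mono:
  "injective_coloring_on E F k col \<Longrightarrow> k \<le> k' \<Longrightarrow> injective_coloring_on E F k' col"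
  unfolding injective_coloring_on_def by auto

lemma injective_coloring_on_UN:
  assumes "\<And>i. i < n \<Longrightarrow> \<exists>col. injective_coloring_on E (F i) K col"
  shows "\<exists>col. injective_coloring_on E (\<Union>i<n. F i) (n * K) col"
proof -
  have "\<exists>cols. \<forall>i\<in>{..<n}. injective_coloring_on E (F i) K (cols i)"
    using assms by (intro bchoice) blast
  then obtain cols where cols: "\<And>i. i < n \<Longrightarrow> injective_coloring_on E (F i) K (cols i)" by auto
  define idx where "idx e = (LEAST i. e \<in> F i)" for e
  define col where "col e = idx e * K + cols (idx e) e" for e
  have idx: "idx e < n" "e \<in> F (idx e)" if e: "e \<in> (\<Union>i<n. F i)" for e
  proof -
    obtain i where i: "i < n" "e \<in> F i" using e by blast
    show "e \<in> F (idx e)" unfolding idx_def by (rule LeastI[of _ i]) (rule i(2))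
    show "idx e < n" unfolding idx_def using Least_le[of "\<lambda>i. e \<in> F i" i] i by linarith
  qed
  have below: "cols (idx e) e < K" if "e \<in> (\<Union>i<n. F i)" for e
    using cols[OF idx(1)[OF that]] idx(2)[OF that] unfolding injective_coloring_on_def by blast
  have div_col: "col e div K = idx e" if "e \<in> (\<Union>i<n. F i)" for e
    using below[OF that] by (simp add: col_def)
  have "col e < n * K" if "e \<in> (\<Union>i<n. F i)" for e
  proof -
    have "col e < (idx e + 1) * K" using below[OF that] by (simp add: col_def)
    also have "\<dots> \<le> n * K" using idx(1)[OF that] by (intro mult_le_mono1) simp
    finally show ?thesis .
  qed
  moreover have "col e \<noteq> col f"
    if "e \<in> (\<Union>i<n. F i)" "f \<in> (\<Union>i<n. F i)" "e \<noteq> f" "inj_conflict E e f" for e f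
  proof (cases "idx e = idx f")
    case True
    have "injective_coloring_on E (F (idx e)) K (cols (idx e))" by (rule cols[OF idx(1)[OF that(1)]])
    moreover have "e \<in> F (idx e)" "f \<in> F (idx e)" using idx(2) that(1,2) True by metis+
    ultimately have "cols (idx e) e \<noteq> cols (idx e) f"
      using that(3,4) unfolding injective_coloring_on_def by blast
    then show ?thesis using True by (simp add: col_def)
  next
    case False
    then show ?thesis using div_col[OF that(1)] div_col[OF that(2)] by auto
  qed
  ultimately show ?thesis unfolding injective_coloring_on_def by blast
qed

lemma injective_edge_coloring_iff: "injective_edge_coloring E k col \<longleftrightarrow> injective_coloring_on E E k col"
  unfolding injective_edge_coloring_def injective_coloring_on_def by simp

lemma inj_chromatic_index_le: "injective_edge_coloring E k col \<Longrightarrow> inj_chromatic_index E \<le> k"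
  unfolding inj_chromatic_index_def by (intro Least_le) blast

lemma no_inj_conflict_if_isolated:
  assumes G: "simple_graph V E" and A: "\<And>x y. {x, y} \<in> E \<Longrightarrow> x \<notin> A \<or> y \<notin> A"
    and e: "e = {u, v}" "e \<in> E" "u \<in> A" "v \<notin> A"
    and f: "f = {u', v'}" "f \<in> E" "u' \<in> A" "v' \<notin> A"
    and "e \<noteq> f" and Z: "edge_nbhd E e \<inter> Z = {v}" "edge_nbhd E f \<inter> Z = {v'}"
  shows "\<not> inj_conflict E e f"
proof
  have "v \<in> Z" "v' \<in> Z" using Z by auto
  have near_e: "w = v" if "w \<in> nbrs E x" "x \<in> e" "w \<in> Z" for w x
    using Z(1) that unfolding edge_nbhd_def by blast
  have near_f: "w = v'" if "w \<in> nbrs E x" "x \<in> f" "w \<in> Z" for w x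
    using Z(2) that unfolding edge_nbhd_def by blast
  assume "inj_conflict E e f"
  then show False unfolding inj_conflict_def
  proof (elim disjE conjE exE bexE)
    fix g assume disj: "e \<inter> f = {}" and g: "g \<in> E" "g \<inter> e \<noteq> {}" "g \<inter> f \<noteq> {}"
    obtain z w where zw: "z \<in> g \<inter> e" "w \<in> g \<inter> f" using g by blast
    moreover obtain x y where "g = {x, y}" using simple_graph_edgeE[OF G g(1)] by metis
    ultimately have "g = {z, w}" using disj by auto
    then have adj: "w \<in> nbrs E z" "z \<in> nbrs E w" using g(1) by (simp_all add: nbrs_def insert_commute)
    show False
    proof (cases "w = v'")
      case True
      then show ?thesis using near_e[OF adj(1)] zw disj \<open>v' \<in> Z\<close> e(1) f(1) by blast
    next
      case False
      then have "w = u'" "z \<notin> A" using zw f A[of z w] \<open>g = {z, w}\<close> g(1) by auto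
      then have "z = v" using zw e(1) e(3) by auto
      then show ?thesis using near_f[OF adj(2)] zw disj \<open>v \<in> Z\<close> e(1) f(1) by blast
    qed
  next
    fix a b c assume tri: "{a, b} \<in> E" "{b, c} \<in> E" "{a, c} \<in> E"
      "e \<in> {{a, b}, {b, c}, {a, c}}" "f \<in> {{a, b}, {b, c}, {a, c}}"
    have "u \<in> {a, b, c}" "u' \<in> {a, b, c}" using tri(4,5) e(1) f(1) by auto
    show False
    proof (cases "u = u'")
      case True
      then have "v' \<in> nbrs E u" using f(1,2) by (simp add: nbrs_def)
      then have "v' = v" using near_e \<open>v' \<in> Z\<close> e(1) by blast
      then show False using True \<open>e \<noteq> f\<close> e(1) f(1) by simp
    next
      case False
      then have "{u, u'} \<in> E" using triangle_edge[OF tri(1-3)] \<open>u \<in> {a, b, c}\<close> \<open>u' \<in> {a, b, c}\<close> by blast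
      then show False using A e(3) f(3) by blast
    qed
  qed
qed

lemma injective_coloring_on_if_isolated:
  assumes G: "simple_graph V E" and A: "\<And>x y. {x, y} \<in> E \<Longrightarrow> x \<notin> A \<or> y \<notin> A"
    and F: "F \<subseteq> E" and one_sided: "\<And>e. e \<in> F \<Longrightarrow> \<exists>u v. e = {u, v} \<and> u \<in> A \<and> v \<notin> A"
    and isolated: "\<And>e. e \<in> F \<Longrightarrow> \<exists>t<K. edge_nbhd E e \<inter> Z t = e - A"
  shows "\<exists>col. injective_coloring_on E F K col"
proof -
  define col where "col e = (LEAST t. edge_nbhd E e \<inter> Z t = e - A)" for e
  have col: "col e < K" "edge_nbhd E e \<inter> Z (col e) = e - A" if e: "e \<in> F" for e
  proof -
    obtain t where t: "t < K" "edge_nbhd E e \<inter> Z t = e - A" using isolated[OF e] by blast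
    show "edge_nbhd E e \<inter> Z (col e) = e - A" unfolding col_def by (rule LeastI[of _ t]) (rule t(2))
    have "col e \<le> t" unfolding col_def by (rule Least_le) (rule t(2))
    then show "col e < K" using t(1) by simp
  qed
  have "\<not> inj_conflict E e f" if ef: "e \<in> F" "f \<in> F" "e \<noteq> f" "col e = col f" for e f
  proof -
    obtain u v u' v' where uv: "e = {u, v}" "u \<in> A" "v \<notin> A" and uv': "f = {u', v'}" "u' \<in> A" "v' \<notin> A"
      using one_sided ef(1,2) by metis
    have "e - A = {v}" "f - A = {v'}" using uv uv' by auto
    then have "edge_nbhd E e \<inter> Z (col e) = {v}" "edge_nbhd E f \<inter> Z (col e) = {v'}"
      using col(2) ef by metis+
    moreover have "e \<in> E" "f \<in> E" using ef F by auto
    ultimately show ?thesis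
      using no_inj_conflict_if_isolated[OF G A uv(1) _ uv(2,3) uv'(1) _ uv'(2,3) \<open>e \<noteq> f\<close>] by blast
  qed
  then show ?thesis using col(1) unfolding injective_coloring_on_def by auto
qed

section \<open>Random rounds\<close>

text \<open>
  An outcome \<open>\<omega> \<in> rounds V K m\<close> picks vertex \<open>w\<close> in round \<open>t\<close> iff \<open>\<omega> (w, t) = 0\<close>; under the
  uniform distribution the picks are independent, each with probability \<open>1/m\<close>.
\<close>

definition rounds :: "'a set \<Rightarrow> nat \<Rightarrow> nat \<Rightarrow> ('a \<times> nat \<Rightarrow> nat) set" where
  "rounds V K m = PiE (V \<times> {..<K}) (\<lambda>_. {..<m})"

definition never_isolated :: "'a set \<Rightarrow> nat \<Rightarrow> nat \<Rightarrow> 'a set \<Rightarrow> 'a \<Rightarrow> ('a \<times> nat \<Rightarrow> nat) set" where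
  "never_isolated V K m X v = {\<omega> \<in> rounds V K m. \<forall>t<K. X \<inter> {w. \<omega> (w, t) = 0} \<noteq> {v}}"

lemma finite_rounds: "finite V \<Longrightarrow> finite (rounds V K m)"
  unfolding rounds_def by (simp add: finite_PiE)

lemma card_rounds_pos: "finite V \<Longrightarrow> 0 < m \<Longrightarrow> 0 < card (rounds V K m)"
  unfolding rounds_def by (simp add: card_PiE)

lemma depends_on_zero_sets:
  fixes \<Omega> :: "('a \<times> 'b \<Rightarrow> 'c::zero) set"
  shows "depends_on \<Omega> (X \<times> T) {\<omega>\<in>\<Omega>. \<forall>t\<in>T. Q t (X \<inter> {w. \<omega> (w, t) = 0})}"
proof (unfold depends_on_def, intro ballI impI)
  fix \<omega> \<omega>' :: "'a \<times> 'b \<Rightarrow> 'c" assume "\<forall>i\<in>X \<times> T. \<omega> i = \<omega>' i"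
  then have "X \<inter> {w. \<omega> (w, t) = 0} = X \<inter> {w. \<omega>' (w, t) = 0}" if "t \<in> T" for t
    using that by auto
  then show "\<omega> \<in> {\<omega>\<in>\<Omega>. \<forall>t\<in>T. Q t (X \<inter> {w. \<omega> (w, t) = 0})} \<longleftrightarrow>
      \<omega>' \<in> {\<omega>\<in>\<Omega>. \<forall>t\<in>T. Q t (X \<inter> {w. \<omega> (w, t) = 0})}"
    if "\<omega> \<in> \<Omega>" "\<omega>' \<in> \<Omega>" using that by auto
qed

lemma card_isolated_in_round:
  assumes V: "finite V" and X: "X \<subseteq> V" "v \<in> X" and m: "0 < m" and t: "t < K"
  shows "card {\<omega> \<in> rounds V K m. X \<inter> {w. \<omega> (w, t) = 0} = {v}} * m ^ card X
       = (m - 1) ^ (card X - 1) * card (rounds V K m)"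
proof -
  let ?I = "V \<times> {..<K}" and ?Y = "X \<times> {t}"
  define F where "F i = (if i = (v, t) then {0} else {1..<m})" for i :: "'a \<times> nat"
  have finX: "finite X" using V X finite_subset by blast
  have YI: "?Y \<subseteq> ?I" using X t by auto
  have "{\<omega> \<in> rounds V K m. X \<inter> {w. \<omega> (w, t) = 0} = {v}} = {\<omega> \<in> PiE ?I (\<lambda>_. {..<m}). \<forall>i\<in>?Y. \<omega> i \<in> F i}"
    using X t by (auto simp: rounds_def F_def PiE_iff)
  also have "card \<dots> = (\<Prod>i\<in>?Y. card (F i)) * m ^ card (?I - ?Y)"
    using V YI m by (subst card_PiE_coordinate_constraints) (auto simp: F_def)
  also have "(\<Prod>i\<in>?Y. card (F i)) = (m - 1) ^ (card X - 1)"
  proof -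
    have "(\<Prod>i\<in>?Y. card (F i)) = card (F (v, t)) * (\<Prod>i\<in>?Y - {(v, t)}. card (F i))"
      using finX X by (intro prod.remove) auto
    also have "\<dots> = (\<Prod>i\<in>?Y - {(v, t)}. m - 1)" by (simp add: F_def)
    also have "\<dots> = (m - 1) ^ (card X - 1)" using finX X by (simp add: card_cartesian_product)
    finally show ?thesis .
  qed
  finally have "card {\<omega> \<in> rounds V K m. X \<inter> {w. \<omega> (w, t) = 0} = {v}} * m ^ card X
      = (m - 1) ^ (card X - 1) * (m ^ card (?I - ?Y) * m ^ card ?Y)"
    by (simp add: card_cartesian_product)
  also have "m ^ card (?I - ?Y) * m ^ card ?Y = card (rounds V K m)"
    using V YI card_Diff_subset[of ?Y ?I] card_mono[of ?I ?Y]
    by (simp add: rounds_def card_PiE power_add[symmetric] finite_subset)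
  finally show ?thesis .
qed

lemma card_never_isolated:
  assumes V: "finite V" and X: "X \<subseteq> V" "v \<in> X" and m: "0 < m"
  shows "real (card (never_isolated V K m X v))
       = (1 - real ((m - 1) ^ (card X - 1)) / real (m ^ card X)) ^ K * real (card (rounds V K m))"
proof -
  let ?\<Omega> = "rounds V K m"
  define p where "p = real ((m - 1) ^ (card X - 1)) / real (m ^ card X)"
  define G where "G t = {\<omega> \<in> ?\<Omega>. \<forall>s\<in>{t}. X \<inter> {w. \<omega> (w, s) = 0} \<noteq> {v}}" for t
  have N: "0 < card ?\<Omega>" using V m by (rule card_rounds_pos)
  have card_G: "real (card (G t)) = (1 - p) * real (card ?\<Omega>)" if "t < K" for t
  proof -
    have "real (card {\<omega> \<in> ?\<Omega>. X \<inter> {w. \<omega> (w, t) = 0} = {v}}) = p * real (card ?\<Omega>)"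
      using arg_cong[OF card_isolated_in_round[OF V X m that], of real] m
      by (simp add: p_def field_simps)
    moreover have "G t = ?\<Omega> - {\<omega> \<in> ?\<Omega>. X \<inter> {w. \<omega> (w, t) = 0} = {v}}" by (auto simp: G_def)
    ultimately show ?thesis
      using finite_rounds[OF V] by (simp add: card_Diff_subset card_mono algebra_simps)
  qed
  have "card {\<omega>\<in>?\<Omega>. \<forall>t\<in>{..<K}. \<omega> \<in> G t} * card ?\<Omega> ^ card {..<K}
      = (\<Prod>t\<in>{..<K}. card (G t)) * card ?\<Omega>"
    unfolding rounds_def
  proof (rule card_PiE_Ball_independent[where Y = "\<lambda>t. X \<times> {t}"])
    show "X \<times> {t} \<subseteq> V \<times> {..<K}" if "t \<in> {..<K}" for t using X that by auto
    show "depends_on (PiE (V \<times> {..<K}) (\<lambda>_. {..<m})) (X \<times> {t}) (G t)" for t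
      unfolding G_def rounds_def by (rule depends_on_zero_sets)
  qed (auto simp: G_def rounds_def)
  moreover have "{\<omega>\<in>?\<Omega>. \<forall>t\<in>{..<K}. \<omega> \<in> G t} = never_isolated V K m X v"
    by (auto simp: G_def never_isolated_def)
  ultimately have "card (never_isolated V K m X v) * card ?\<Omega> ^ K = (\<Prod>t<K. card (G t)) * card ?\<Omega>"
    by simp
  then have "real (card (never_isolated V K m X v)) * real (card ?\<Omega>) ^ K
      = (\<Prod>t<K. real (card (G t))) * real (card ?\<Omega>)"
    unfolding of_nat_prod[symmetric] of_nat_power[symmetric] of_nat_mult[symmetric] by (rule arg_cong)
  also have "\<dots> = ((1 - p) * real (card ?\<Omega>)) ^ K * real (card ?\<Omega>)"
    by (simp add: card_G)
  finally show ?thesis using N by (simp add: p_def power_mult_distrib)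
qed

lemma never_isolated_subset: "never_isolated V K m X v \<subseteq> rounds V K m"
  by (auto simp: never_isolated_def)

lemma depends_on_never_isolated: "depends_on (rounds V K m) (X \<times> {..<K}) (never_isolated V K m X v)"
  using depends_on_zero_sets[of "rounds V K m" X "{..<K}" "\<lambda>_ Z. Z \<noteq> {v}"]
  by (simp add: never_isolated_def Ball_def)

lemma card_never_isolated_avoiding_independent:
  assumes "X \<subseteq> V" and "\<And>s. s \<in> S \<Longrightarrow> Xs s \<subseteq> V - X"
  shows "card (never_isolated V K m X v \<inter> (rounds V K m - (\<Union>s\<in>S. never_isolated V K m (Xs s) (vs s))))
      * card (rounds V K m)
    = card (never_isolated V K m X v) * card (rounds V K m - (\<Union>s\<in>S. never_isolated V K m (Xs s) (vs s)))"
  unfolding rounds_def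
proof (rule card_Int_avoiding_PiE_independent)
  show "X \<times> {..<K} \<subseteq> V \<times> {..<K}" using assms(1) by blast
  show "Xs s \<times> {..<K} \<subseteq> V \<times> {..<K} - X \<times> {..<K}" if "s \<in> S" for s
    using assms(2)[OF that] by blast
qed (simp_all only: never_isolated_subset[unfolded rounds_def] depends_on_never_isolated[unfolded rounds_def])

lemma isolation_probability_ge:
  fixes m x :: nat
  assumes m: "2 \<le> m" and x: "1 \<le> x" "x \<le> m"
  shows "1 / (3 * real m) \<le> real ((m - 1) ^ (x - 1)) / real (m ^ x)"
proof -
  define r where "r = (real m - 1) / real m"
  have r: "0 < r" "r \<le> 1" using m by (auto simp: r_def)
  have "real (m ^ x) = real m ^ (x - 1) * real m"
    using x by (metis of_nat_power power_minus_mult not_one_le_zero zero_less_iff_neq_zero)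
  then have eq: "real ((m - 1) ^ (x - 1)) / real (m ^ x) = r ^ (x - 1) / real m"
    using m by (simp add: r_def power_divide)
  have "(1 + 1 / real (m - 1)) ^ (m - 1) \<le> exp 1"
    using m exp_ge_one_plus_x_over_n_power_n[of "m - 1" 1] by simp
  moreover have "1 + 1 / real (m - 1) = 1 / r" using m by (simp add: r_def field_simps)
  ultimately have "1 / r ^ (m - 1) \<le> exp 1" by (simp add: power_one_over)
  then have "exp (-1) \<le> r ^ (m - 1)"
    using zero_less_power[OF r(1)] by (simp add: exp_minus field_simps)
  moreover have "1 / 3 \<le> exp (-1 :: real)" using exp_le by (simp add: exp_minus field_simps)
  moreover have "r ^ (m - 1) \<le> r ^ (x - 1)" using r x by (intro power_decreasing) auto
  ultimately have "1 / 3 \<le> r ^ (x - 1)" by linarith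
  then have "1 / 3 / real m \<le> r ^ (x - 1) / real m" by (rule divide_right_mono) simp
  then show ?thesis unfolding eq by simp
qed

lemma lll_degree_bound_le_powr:
  fixes D :: nat
  assumes "6 \<le> D"
  shows "4 * (2 * real D ^ 3 + 1) \<le> real D powr (9 / 2)"
proof -
  have "2 \<le> sqrt (real D)" using assms real_le_rsqrt[of 2 "real D"] by simp
  have "4 * (2 * real D ^ 3 + 1) \<le> 12 * real D ^ 3" using assms by simp
  also have "\<dots> \<le> 2 * (real D * real D ^ 3)" using assms by (simp add: mult_right_mono)
  also have "\<dots> = 2 * real D ^ 4" by (simp add: power_Suc[symmetric] del: power_Suc)
  also have "\<dots> \<le> sqrt (real D) * real D ^ 4" using \<open>2 \<le> sqrt (real D)\<close> by (rule mult_right_mono) simp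
  also have "\<dots> = real D powr (1 / 2) * real D powr 4"
    by (simp add: powr_half_sqrt)
  also have "\<dots> = real D powr (9 / 2)" by (simp only: powr_add[symmetric]) simp
  finally show ?thesis .
qed

lemma lll_condition_numeric:
  fixes D K :: nat and q :: real
  assumes D: "6 \<le> D" and K: "27 * real D * ln (real D) \<le> real K"
    and q: "1 / (6 * real D) \<le> q" "q \<le> 1"
  shows "4 * (2 * real D ^ 3 + 1) * (1 - q) ^ K \<le> 1"
proof -
  have "9 / 2 * ln (real D) = 27 * real D * ln (real D) / (6 * real D)" using D by simp
  also have "\<dots> \<le> real K / (6 * real D)" using K D by (intro divide_right_mono) auto
  also have "\<dots> = 1 / (6 * real D) * real K" by simp
  also have "\<dots> \<le> q * real K" using q(1) by (rule mult_right_mono) simp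
  finally have qK: "9 / 2 * ln (real D) \<le> q * real K" .
  have "(1 - q) ^ K \<le> exp (- q) ^ K"
    using q exp_ge_add_one_self[of "- q"] by (intro power_mono) auto
  also have "\<dots> = exp (- (q * real K))" by (simp add: exp_of_nat_mult[symmetric] mult.commute)
  also have "\<dots> \<le> exp (- (9 / 2 * ln (real D)))" using qK by simp
  also have "\<dots> = 1 / real D powr (9 / 2)" using D by (simp add: powr_def exp_minus inverse_eq_divide)
  finally have "(1 - q) ^ K \<le> 1 / real D powr (9 / 2)" .
  with lll_degree_bound_le_powr[OF D]
  have "4 * (2 * real D ^ 3 + 1) * (1 - q) ^ K \<le> real D powr (9 / 2) * (1 / real D powr (9 / 2))"
    using q(2) by (intro mult_mono) auto
  then show ?thesis using D by simp
qed

lemma lll_condition_never_isolated: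
  assumes G: "simple_graph V E" and \<Delta>: "max_degree V E = \<Delta>" "6 \<le> \<Delta>" and e: "e \<in> E" "v \<in> e"
    and K: "27 * real \<Delta> * ln (real \<Delta>) \<le> real K"
  shows "4 * (2 * \<Delta> ^ 3 + 1) * card (never_isolated V K (2 * \<Delta>) (edge_nbhd E e) v)
    \<le> card (rounds V K (2 * \<Delta>))"
proof -
  let ?X = "edge_nbhd E e"
  define q where "q = real ((2 * \<Delta> - 1) ^ (card ?X - 1)) / real ((2 * \<Delta>) ^ card ?X)"
  have V: "finite V" using G by (simp add: simple_graph_def)
  have X: "?X \<subseteq> V" "v \<in> ?X" using edge_nbhd_subset[OF G] edge_subset_edge_nbhd[OF G e(1)] e(2) by auto
  have "card ?X \<le> 2 * \<Delta>" using card_edge_nbhd_le[OF G e(1)] \<Delta>(1) by simp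
  moreover have "1 \<le> card ?X" using X V by (metis One_nat_def Suc_leI card_gt_0_iff empty_iff finite_subset)
  ultimately have "1 / (3 * real (2 * \<Delta>)) \<le> q"
    unfolding q_def using \<Delta>(2) by (intro isolation_probability_ge) auto
  then have q_lower: "1 / (6 * real \<Delta>) \<le> q" by simp
  have "(2 * \<Delta> - 1) ^ (card ?X - 1) \<le> (2 * \<Delta>) ^ (card ?X - 1)" by (rule power_mono) simp_all
  also have "\<dots> \<le> (2 * \<Delta>) ^ card ?X" using \<Delta>(2) by (intro power_increasing) simp_all
  finally have "real ((2 * \<Delta> - 1) ^ (card ?X - 1)) \<le> real ((2 * \<Delta>) ^ card ?X)"
    by (simp only: of_nat_le_iff)
  then have "q \<le> 1" unfolding q_def using \<Delta>(2) by (simp add: divide_le_eq_1)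
  have "real (4 * (2 * \<Delta> ^ 3 + 1) * card (never_isolated V K (2 * \<Delta>) ?X v))
      = 4 * (2 * real \<Delta> ^ 3 + 1) * (1 - q) ^ K * real (card (rounds V K (2 * \<Delta>)))"
    using card_never_isolated[OF V X, of "2 * \<Delta>" K] \<Delta>(2) by (simp add: q_def)
  also have "\<dots> \<le> 1 * real (card (rounds V K (2 * \<Delta>)))"
    using lll_condition_numeric[OF \<Delta>(2) K q_lower \<open>q \<le> 1\<close>] by (intro mult_right_mono) auto
  finally show ?thesis by (simp only: of_nat_le_iff mult_1)
qed

lemma exists_isolating_rounds:
  assumes G: "simple_graph V E" and \<Delta>: "max_degree V E = \<Delta>" "6 \<le> \<Delta>" and F: "F \<subseteq> E"
    and c: "\<And>e. e \<in> F \<Longrightarrow> c e \<in> e" and K: "27 * real \<Delta> * ln (real \<Delta>) \<le> real K"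
  shows "\<exists>Z. \<forall>e\<in>F. \<exists>t<K. edge_nbhd E e \<inter> Z t = {c e}"
proof -
  let ?\<Omega> = "rounds V K (2 * \<Delta>)"
  define Bad where "Bad e = never_isolated V K (2 * \<Delta>) (edge_nbhd E e) (c e)" for e
  define \<Gamma> where "\<Gamma> e = {f\<in>E. edge_nbhd E f \<inter> edge_nbhd E e \<noteq> {}}" for e
  have V: "finite V" using G by (simp add: simple_graph_def)
  have "counting_lll ?\<Omega> F Bad \<Gamma> (2 * \<Delta> ^ 3)"
  proof
    show "finite ?\<Omega>" using V by (rule finite_rounds)
    show "finite F" using simple_graph_finite_edges[OF G] F finite_subset by blast
    show "?\<Omega> \<noteq> {}" using card_rounds_pos[OF V, of "2 * \<Delta>" K] \<Delta>(2) by auto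
  next
    fix e S assume e: "e \<in> F" and S: "S \<subseteq> F" "S \<inter> \<Gamma> e = {}"
    have "edge_nbhd E f \<subseteq> V - edge_nbhd E e" if "f \<in> S" for f
      using that S F edge_nbhd_subset[OF G] unfolding \<Gamma>_def by blast
    then show "card (Bad e \<inter> (?\<Omega> - \<Union>(Bad ` S))) * card ?\<Omega> \<le> card (Bad e) * card (?\<Omega> - \<Union>(Bad ` S))"
      unfolding Bad_def using edge_nbhd_subset[OF G]
      by (intro eq_imp_le card_never_isolated_avoiding_independent)
  next
    fix e assume "e \<in> F"
    have "card (\<Gamma> e \<inter> F) \<le> card (\<Gamma> e)"
      using simple_graph_finite_edges[OF G] by (intro card_mono) (auto simp: \<Gamma>_def)
    also have "\<dots> \<le> 2 * \<Delta> ^ 3"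
      using card_edges_near_le[OF G, of e] \<open>e \<in> F\<close> F \<Delta>(1) unfolding \<Gamma>_def by auto
    finally show "card (\<Gamma> e \<inter> F) \<le> 2 * \<Delta> ^ 3" .
    show "4 * (2 * \<Delta> ^ 3 + 1) * card (Bad e) \<le> card ?\<Omega>"
      unfolding Bad_def using \<open>e \<in> F\<close> F c
      by (intro lll_condition_never_isolated[OF G \<Delta> _ _ K]) auto
  qed
  then obtain \<omega> where "\<forall>e\<in>F. \<omega> \<notin> Bad e" "\<omega> \<in> ?\<Omega>"
    using counting_lll.exists_outcome_avoiding_all by metis
  then have "\<forall>e\<in>F. \<exists>t<K. edge_nbhd E e \<inter> {w. \<omega> (w, t) = 0} = {c e}"
    by (simp add: Bad_def never_isolated_def)
  then show ?thesis by (rule exI[of _ "\<lambda>t. {w. \<omega> (w, t) = 0}"])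
qed

lemma ln_2_ge_half: "1 / 2 \<le> ln (2 :: real)"
proof -
  have "exp (1 / 2) \<le> (2 :: real)" using real_exp_bound_lemma[of "1 / 2"] by simp
  then show ?thesis by (subst ln_ge_iff) simp_all
qed

lemma greedy_suffices_for_small_degree:
  fixes \<Delta> K :: nat
  assumes \<Delta>: "2 \<le> \<Delta>" "\<Delta> < 6" and K: "27 * real \<Delta> * ln (real \<Delta>) \<le> real K"
  shows "2 * \<Delta> ^ 2 + 1 \<le> K"
proof -
  have "ln 2 \<le> ln (real \<Delta>)" using \<Delta>(1) by simp
  then have "27 * real \<Delta> * (1 / 2) \<le> 27 * real \<Delta> * ln (real \<Delta>)"
    using ln_2_ge_half by (intro mult_left_mono) auto
  then have "real (27 * \<Delta>) \<le> real (2 * K)" using K by simp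
  then have "27 * \<Delta> \<le> 2 * K" by (simp only: of_nat_le_iff)
  moreover have "\<Delta> * \<Delta> \<le> 5 * \<Delta>" using \<Delta>(2) by simp
  ultimately show ?thesis using \<Delta>(1) unfolding power2_eq_square by linarith
qed

lemma injective_coloring_on_one_sided_edges:
  assumes G: "simple_graph V E" and \<Delta>: "max_degree V E = \<Delta>" "2 \<le> \<Delta>"
    and A: "\<And>x y. {x, y} \<in> E \<Longrightarrow> x \<notin> A \<or> y \<notin> A" and F: "F \<subseteq> E"
    and one_sided: "\<And>e. e \<in> F \<Longrightarrow> \<exists>u v. e = {u, v} \<and> u \<in> A \<and> v \<notin> A"
    and K: "27 * real \<Delta> * ln (real \<Delta>) \<le> real K"
  shows "\<exists>col. injective_coloring_on E F K col"
proof (cases "6 \<le> \<Delta>")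
  case True
  have "\<exists>v. e - A = {v}" if e: "e \<in> F" for e
  proof -
    obtain u v where "e = {u, v}" "u \<in> A" "v \<notin> A" using one_sided[OF e] by blast
    then have "e - A = {v}" by auto
    then show ?thesis ..
  qed
  then obtain c where c: "\<And>e. e \<in> F \<Longrightarrow> e - A = {c e}" by metis
  then have "\<And>e. e \<in> F \<Longrightarrow> c e \<in> e" by blast
  then obtain Z where Z: "\<forall>e\<in>F. \<exists>t<K. edge_nbhd E e \<inter> Z t = {c e}"
    using exists_isolating_rounds[OF G \<Delta>(1) True F _ K] by blast
  have "\<exists>t<K. edge_nbhd E e \<inter> Z t = e - A" if "e \<in> F" for e
    using Z c[OF that] that by simp
  then show ?thesis using injective_coloring_on_if_isolated[OF G A F one_sided] by blast
next
  case False
  obtain col where "injective_coloring_on E F (2 * \<Delta> ^ 2 + 1) col"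
    using greedy_injective_coloring_on[OF G F] \<Delta>(1) by blast
  moreover have "2 * \<Delta> ^ 2 + 1 \<le> K" using greedy_suffices_for_small_degree[OF \<Delta>(2) _ K] False by simp
  ultimately show ?thesis using injective_coloring_on_mono by blast
qed

lemma inj_chromatic_index_le_of_coloring:
  assumes G: "simple_graph V E" and \<Delta>: "max_degree V E = \<Delta>" "2 \<le> \<Delta>"
    and c: "proper_vertex_coloring V E k c" and K: "27 * real \<Delta> * ln (real \<Delta>) \<le> real K"
  shows "inj_chromatic_index E \<le> (k - 1) * K"
proof -
  define F where "F i = {e\<in>E. \<exists>u v. e = {u, v} \<and> c u = i \<and> i < c v}" for i
  have "\<exists>col. injective_coloring_on E (F i) K col" for i
  proof (rule injective_coloring_on_one_sided_edges[OF G \<Delta> _ _ _ K])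
    show "x \<notin> {x. c x = i} \<or> y \<notin> {x. c x = i}" if "{x, y} \<in> E" for x y
    proof -
      have "c x \<noteq> c y" using c that unfolding proper_vertex_coloring_def by blast
      then show ?thesis by auto
    qed
    show "F i \<subseteq> E" by (auto simp: F_def)
    show "\<exists>u v. e = {u, v} \<and> u \<in> {x. c x = i} \<and> v \<notin> {x. c x = i}" if "e \<in> F i" for e
      using that unfolding F_def by fastforce
  qed
  then have "\<exists>col. injective_coloring_on E (\<Union>i<k - 1. F i) ((k - 1) * K) col"
    by (intro injective_coloring_on_UN)
  then obtain col where col: "injective_coloring_on E (\<Union>i<k - 1. F i) ((k - 1) * K) col" by blast
  have "E = (\<Union>i<k - 1. F i)"
  proof
    show "E \<subseteq> (\<Union>i<k - 1. F i)"
    proof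
      fix e assume "e \<in> E"
      then obtain u v where "e = {u, v}" "c u < c v" "c v < k" by (rule proper_vertex_coloring_edge[OF G c])
      then have "e \<in> F (c u)" "c u < k - 1" using \<open>e \<in> E\<close> by (auto simp: F_def)
      then show "e \<in> (\<Union>i<k - 1. F i)" by blast
    qed
  qed (auto simp: F_def)
  then have "injective_edge_coloring E ((k - 1) * K) col" using col by (simp add: injective_edge_coloring_iff)
  then show ?thesis by (rule inj_chromatic_index_le)
qed

lemma inj_chromatic_index_le_ceiling:
  assumes G: "simple_graph V E" and \<Delta>: "max_degree V E = \<Delta>" "2 \<le> \<Delta>"
    and c: "proper_vertex_coloring V E k c" and k: "1 \<le> k"
  shows "int (inj_chromatic_index E) \<le> (int k - 1) * \<lceil>27 * real \<Delta> * ln (real \<Delta>)\<rceil>"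
proof -
  let ?z = "\<lceil>27 * real \<Delta> * ln (real \<Delta>)\<rceil>"
  have "0 \<le> 27 * real \<Delta> * ln (real \<Delta>)" using \<Delta>(2) by simp
  then have "0 \<le> ?z" by simp
  then have "27 * real \<Delta> * ln (real \<Delta>) \<le> real (nat ?z)" by linarith
  then have "inj_chromatic_index E \<le> (k - 1) * nat ?z"
    by (rule inj_chromatic_index_le_of_coloring[OF G \<Delta> c])
  then have "int (inj_chromatic_index E) \<le> int ((k - 1) * nat ?z)" by (simp only: of_nat_le_iff)
  also have "\<dots> = (int k - 1) * ?z" using k \<open>0 \<le> ?z\<close> by simp
  finally show ?thesis .
qed

theorem theorem1p6:
  shows "(\<forall>(V :: 'a set) E (\<Delta>::nat) (\<chi>::nat).
            simple_graph V E \<and> 2 \<le> \<chi> \<and> \<chi> \<le> \<Delta> \<and>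
            max_degree V E = \<Delta> \<and> chromatic_number V E = \<chi> \<longrightarrow>
            int (inj_chromatic_index E) \<le> (int \<chi> - 1) * \<lceil>27 * real \<Delta> * ln (real \<Delta>)\<rceil>)
       \<and> (\<forall>(V :: 'a set) E (\<Delta>::nat).
            simple_graph V E \<and> bipartite V E \<and> max_degree V E = \<Delta> \<and> 2 \<le> \<Delta> \<longrightarrow>
            int (inj_chromatic_index E) \<le> \<lceil>27 * real \<Delta> * ln (real \<Delta>)\<rceil>)"
proof (intro conjI allI impI; elim conjE)
  fix V :: "'a set" and E \<Delta> \<chi>
  assume G: "simple_graph V E" and \<chi>: "2 \<le> \<chi>" "\<chi> \<le> \<Delta>" "chromatic_number V E = \<chi>"
    and \<Delta>: "max_degree V E = \<Delta>"
  obtain c where "proper_vertex_coloring V E \<chi> c" using exists_chromatic_coloring[OF G] \<chi>(3) by auto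
  moreover have "2 \<le> \<Delta>" using \<chi> by linarith
  ultimately show "int (inj_chromatic_index E) \<le> (int \<chi> - 1) * \<lceil>27 * real \<Delta> * ln (real \<Delta>)\<rceil>"
    using inj_chromatic_index_le_ceiling[OF G \<Delta>] \<chi>(1) by simp
next
  fix V :: "'a set" and E \<Delta>
  assume G: "simple_graph V E" and "bipartite V E" and \<Delta>: "max_degree V E = \<Delta>" "2 \<le> \<Delta>"
  then obtain c where "proper_vertex_coloring V E 2 c" by (auto simp: bipartite_def)
  then have "int (inj_chromatic_index E) \<le> (int 2 - 1) * \<lceil>27 * real \<Delta> * ln (real \<Delta>)\<rceil>"
    by (rule inj_chromatic_index_le_ceiling[OF G \<Delta>]) simp
  then show "int (inj_chromatic_index E) \<le> \<lceil>27 * real \<Delta> * ln (real \<Delta>)\<rceil>" by simp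
qed

end
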